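(* Let $a_1\ne0$, $0<\varepsilon<1$, $T=1+\varepsilon$, $(y,x_0)\in M^2$, and $\widetilde{x}(t)=y+a_1\int_0^tx_0(\tau-1)\,d\tau$. Then the minimum energy problem $\|u\|_{L^2(0,T)}\to\min$, $u\in\mathcal{U}_T(y,x_0)$, has a unique solution $\widehat u$. It is given by $$\widehat u(t)=\begin{cases}\widehat u_0(t), & t\in[0,\varepsilon),\\ -a_1x_0(t-1), & t\in[\varepsilon,1),\\ -a_1\Big(\widetilde{x}(t-1)+\int_0^{t-1}\widehat u_0(\tau)\,d\tau\Big), & t\in[1,1+\varepsilon),\end{cases}$$ where $$\widehat u_0(t)=c\cosh(a_1t)+a_1^2\int_0^t\cosh(a_1(t-\tau))\,\widetilde{x}(\tau)\,d\tau,\qquad c=-\frac{a_1}{\sinh(a_1\varepsilon)}\Big(\widetilde{x}(\varepsilon)+a_1\int_0^\varepsilon\sinh(a_1(\varepsilon-\tau))\,\widetilde{x}(\tau)\,d\tau\Big).$$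
   Context: Consider the scalar retarded control equation $\dot x(t)=a_1x(t-1)+u(t)$, $t\ge0$, with control $u\in L^2_{loc}(0,\infty)$ and initial data $x(0)=y$, $x(t)=x_0(t)$ for $t\in[-1,0)$, where $(y,x_0)\in M^2=\mathbb{R}\times L^2(-1,0)$. For every such initial state and control there is a unique continuous solution $x(t)=x(t;y,x_0,u)$ on $[0,\infty)$. For $T>1$, the set of admissible controls $\mathcal{U}_T(y,x_0)$ is the set of $u\in L^2(0,T)$ such that $x(t;y,x_0,u)=0$ for all $t\in[T-1,T]$. *)

theory Defs
  imports "HOL-Analysis.Analysis"
begin

definition L2_on :: "real set \<Rightarrow> (real \<Rightarrow> real) \<Rightarrow> bool" where
  "L2_on S f \<longleftrightarrow> set_borel_measurable lborel S f \<and> set_integrable lborel S (\<lambda>t. (f t)^2)"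

definition L2_norm_on :: "real set \<Rightarrow> (real \<Rightarrow> real) \<Rightarrow> real" where
  "L2_norm_on S f = sqrt (LINT t:S|lborel. (f t)^2)"

text \<open>x is a (continuous) solution on [0,T] of x'(t) = a1 x(t-1) + u(t),
  x(0) = y, x(t) = x0(t) on [-1,0), written in integrated form.\<close>
definition dde_sol :: "real \<Rightarrow> real \<Rightarrow> (real \<Rightarrow> real) \<Rightarrow> (real \<Rightarrow> real) \<Rightarrow> real \<Rightarrow> (real \<Rightarrow> real) \<Rightarrow> bool" where
  "dde_sol a1 y x0 u T x \<longleftrightarrow> continuous_on {0..T} x \<and>
     (\<forall>t\<in>{0..T}. x t = y + (LINT s:{0..t}|lborel. a1 * (if s < 1 then x0 (s - 1) else x (s - 1)) + u s))"

definition admissible :: "real \<Rightarrow> real \<Rightarrow> real \<Rightarrow> (real \<Rightarrow> real) \<Rightarrow> (real \<Rightarrow> real) \<Rightarrow> bool" where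
  "admissible a1 T y x0 u \<longleftrightarrow> L2_on {0..T} u \<and>
     (\<exists>x. dde_sol a1 y x0 u T x \<and> (\<forall>t\<in>{T - 1..T}. x t = 0))"

end

theory Submission
  imports Defs
begin

text \<open>For an admissible control u let w = u - u_opt be its deviation from the claimed optimum and
  W the difference of the two trajectories. Both trajectories vanish on [eps, 1 + eps], so the
  delay equation W' = a1 W(t - 1) + w (with W(t - 1) = 0 for t < 1, as the initial data agree)
  forces w = 0 on [eps, 1) and w = -a1 W(t - 1) on [1, 1 + eps], while W(t) is the primitive of w on [0, eps] with W(eps) = 0. On [0, eps] the
  control u_opt0 satisfies u_opt0' = a1^2 x_opt, where x_opt is the optimal trajectory, so after
  exchanging the order of integration
  int u_opt w = int_0^eps u_opt0 w + a1^2 int_0^eps x_opt W = u_opt0(eps) int_0^eps w = 0.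
  Thus u_opt is orthogonal in L2 to every admissible deviation, and Pythagoras' theorem yields
  both minimality and uniqueness.\<close>

section \<open>Lebesgue integrals on intervals\<close>

lemma set_borel_measurable_if_set_integrable:
  "set_integrable M S f \<Longrightarrow> set_borel_measurable M S f"
  unfolding set_integrable_def set_borel_measurable_def by (rule borel_measurable_integrable)

lemma set_integrable_cong_on:
  "set_integrable M A g \<Longrightarrow> (\<And>x. x \<in> A \<Longrightarrow> f x = g x) \<Longrightarrow> set_integrable M A f"
  using set_integrable_cong[of M M A A f g] by simp

lemma set_integral_shift:
  fixes f :: "real \<Rightarrow> real"
  assumes "\<And>t. t \<in> B \<longleftrightarrow> t - d \<in> A"
  shows "(LINT t:B|lborel. f (t - d)) = (LINT s:A|lborel. f s)"
    and "set_integrable lborel B (\<lambda>t. f (t - d)) \<longleftrightarrow> set_integrable lborel A f"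
proof -
  have eq: "(\<lambda>t. indicator A (- d + 1 * t) *\<^sub>R f (- d + 1 * t)) = (\<lambda>t. indicator B t *\<^sub>R f (t - d))"
    using assms by (auto simp: fun_eq_iff split: split_indicator)
  show "(LINT t:B|lborel. f (t - d)) = (LINT s:A|lborel. f s)"
    unfolding set_lebesgue_integral_def
    using lborel_integral_real_affine[of 1 "\<lambda>t. indicator A t *\<^sub>R f t" "-d"] eq by simp
  show "set_integrable lborel B (\<lambda>t. f (t - d)) \<longleftrightarrow> set_integrable lborel A f"
    unfolding set_integrable_def
    using lborel_integrable_real_affine_iff[of 1 "\<lambda>t. indicator A t *\<^sub>R f t" "-d"] eq by simp
qed

lemma set_integral_Icc_split:
  fixes f :: "real \<Rightarrow> real"
  assumes "set_integrable lborel {a..c} f" "a \<le> b" "b \<le> c"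
  shows "(LINT t:{a..c}|lborel. f t) = (LINT t:{a..b}|lborel. f t) + (LINT t:{b..c}|lborel. f t)"
proof -
  have "{a..c} = {a..b} \<union> {b..c}" using assms by auto
  moreover have "AE t in lborel. \<not> (t \<in> {a..b} \<and> t \<in> {b..c})"
    using AE_lborel_singleton[of b] by eventually_elim auto
  ultimately show ?thesis
    using assms by (auto intro!: set_integral_Un_AE set_integrable_subset[OF assms(1)])
qed

lemma set_integral_Ico_Icc:
  fixes f :: "real \<Rightarrow> real"
  assumes "set_integrable lborel {a..b} f"
  shows "(LINT t:{a..<b}|lborel. f t) = (LINT t:{a..b}|lborel. f t)"
proof (rule set_integral_cong_set)
  show "set_borel_measurable lborel {a..b} f"
    using assms by (rule set_borel_measurable_if_set_integrable)
  then show "set_borel_measurable lborel {a..<b} f"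
    by (rule set_borel_measurable_subset) auto
  show "AE t in lborel. t \<in> {a..b} \<longleftrightarrow> t \<in> {a..<b}"
    using AE_lborel_singleton[of b] by eventually_elim auto
qed

lemma set_integral_Icc_split3:
  fixes f :: "real \<Rightarrow> real"
  assumes f: "set_integrable lborel {a..d} f" and "a \<le> b" "b \<le> c" "c \<le> d"
  shows "(LINT t:{a..d}|lborel. f t)
       = (LINT t:{a..<b}|lborel. f t) + (LINT t:{b..<c}|lborel. f t) + (LINT t:{c..d}|lborel. f t)"
proof -
  have split: "{a..d} = ({a..<b} \<union> {b..<c}) \<union> {c..d}" using assms by auto
  have "set_integrable lborel ({a..<b} \<union> {b..<c}) f"
    by (rule set_integrable_subset[OF f]) (use assms in auto)
  then show ?thesis
    unfolding split using assms
    by (subst set_integral_Un; auto intro!: set_integral_Un set_integrable_subset[OF f])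
qed

lemma continuous_on_set_integral_primitive:
  fixes f :: "real \<Rightarrow> real"
  assumes f: "set_integrable lborel {a..b} f"
  shows "continuous_on {a..b} (\<lambda>t. LINT s:{a..t}|lborel. f s)"
proof -
  have "(LINT s:{a..t}|lborel. f s) = integral {a..t} f" if "t \<in> {a..b}" for t
    using that by (simp add: set_borel_integral_eq_integral(2) set_integrable_subset[OF f])
  moreover have "continuous_on {a..b} (\<lambda>t. integral {a..t} f)"
    by (rule indefinite_integral_continuous_1, rule set_borel_integral_eq_integral(1)[OF f])
  ultimately show ?thesis
    by (metis (no_types, lifting) continuous_on_cong)
qed

lemma set_integral_eq_0_AE:
  fixes f :: "real \<Rightarrow> real"
  assumes "AE t in lborel. t \<in> A \<longrightarrow> f t = 0"
  shows "(LINT t:A|lborel. f t) = 0"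
  unfolding set_lebesgue_integral_def
  by (rule integral_eq_zero_AE) (use assms in \<open>auto split: split_indicator\<close>)

lemma set_integral_Icc_cong_Ico:
  fixes f g :: "real \<Rightarrow> real"
  assumes f: "set_integrable lborel {a..b} f" and eq: "\<And>t. t \<in> {a..<b} \<Longrightarrow> g t = f t"
  shows "set_integrable lborel {a..b} g"
    and "(LINT t:{a..b}|lborel. g t) = (LINT t:{a..b}|lborel. f t)"
proof -
  have "set_integrable lborel {a..<b} f"
    by (rule set_integrable_subset[OF f]) auto
  then have "set_integrable lborel {a..<b} g"
    by (rule set_integrable_cong_on) (use eq in auto)
  then have "set_integrable lborel ({a..<b} \<union> {b}) g"
    by (rule set_integrable_Un) auto
  then show g: "set_integrable lborel {a..b} g"
    by (rule set_integrable_subset) auto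
  have "(LINT t:{a..b}|lborel. g t) = (LINT t:{a..<b}|lborel. g t)"
    by (rule set_integral_Ico_Icc[OF g, symmetric])
  also have "\<dots> = (LINT t:{a..<b}|lborel. f t)"
    using eq by (simp add: set_lebesgue_integral_cong)
  also have "\<dots> = (LINT t:{a..b}|lborel. f t)"
    by (rule set_integral_Ico_Icc[OF f])
  finally show "(LINT t:{a..b}|lborel. g t) = (LINT t:{a..b}|lborel. f t)" .
qed

lemma AE_eq_0_if_interval_integrals_eq_0:
  fixes g :: "real \<Rightarrow> real"
  assumes g: "set_integrable lborel {a..b} g"
    and zero: "\<And>t. t \<in> {a..b} \<Longrightarrow> (LINT s:{a..t}|lborel. g s) = 0"
  shows "AE s in lborel. s \<in> {a..b} \<longrightarrow> g s = 0"
proof -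
  define f where "f = (\<lambda>s. indicator {a..b} s * g s)"
  have "integrable lborel f" using g unfolding f_def set_integrable_def by simp
  then have f_UNIV: "f integrable_on UNIV"
    using has_integral_integral_lborel by (auto simp: integrable_on_def)
  then have f_cbox: "\<And>c d. f integrable_on cbox c d"
    by (rule integrable_on_subcbox) simp
  obtain N where N: "negligible N" and
    deriv: "\<And>x e. \<lbrakk>x \<notin> N; 0 < e\<rbrakk> \<Longrightarrow>
      \<exists>d>0. \<forall>h. 0 < h \<and> h < d \<longrightarrow>
        norm (integral (cbox x (x + h *\<^sub>R One)) f /\<^sub>R h ^ DIM(real) - f x) < e"
    using integrable_ccontinuous_explicit[OF f_cbox] by blast
  have int_0: "integral {a..t} f = 0" if "t \<in> {a..b}" for t
  proof -
    have "integral {a..t} f = integral {a..t} g"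
      by (rule integral_cong) (use that in \<open>auto simp: f_def\<close>)
    also have "\<dots> = (LINT s:{a..t}|lborel. g s)"
      by (rule set_borel_integral_eq_integral(2)[symmetric], rule set_integrable_subset[OF g])
        (use that in auto)
    finally show ?thesis using zero[OF that] by simp
  qed
  \<comment> \<open>Lebesgue differentiation: off N, f x is the limit of its averages over [x, x + h],
    and these vanish.\<close>
  have f_0: "f x = 0" if x: "x \<in> {a<..<b}" "x \<notin> N" for x
  proof (rule ccontr)
    assume "f x \<noteq> 0"
    then obtain d where d: "d > 0" and
      near: "\<And>h. 0 < h \<and> h < d \<Longrightarrow>
        norm (integral (cbox x (x + h *\<^sub>R One)) f /\<^sub>R h ^ DIM(real) - f x) < norm (f x)"
      using deriv[OF x(2)] by (metis zero_less_norm_iff)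
    define h where "h = min d (b - x) / 2"
    have h: "0 < h" "h < d" "x + h \<le> b" using d x unfolding h_def by (auto simp: min_def field_simps)
    have "integral {a..x} f + integral {x..x + h} f = integral {a..x + h} f"
      using Henstock_Kurzweil_Integration.integral_combine[of a x "x + h" f] x h f_cbox[of a "x + h"]
      by simp
    then have "integral {x..x + h} f = 0"
      using int_0[of x] int_0[of "x + h"] x h by simp
    then show False using near[of h] h by (simp add: cbox_interval)
  qed
  have "N \<union> {a, b} \<in> null_sets lebesgue"
    using N by (simp add: negligible_insert negligible_iff_null_sets[symmetric])
  then have "AE s in lebesgue. s \<notin> N \<union> {a, b}"
    by (rule AE_not_in)
  then have "AE s in lebesgue. s \<in> {a..b} \<longrightarrow> g s = 0"
  proof (rule AE_mp, intro AE_I2 impI)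
    fix s assume "s \<notin> N \<union> {a, b}" "s \<in> {a..b}"
    with f_0[of s] show "g s = 0" by (simp add: f_def)
  qed
  then show ?thesis by (simp add: AE_completion_iff)
qed

lemma AE_eq_0_if_primitive_vanishes:
  fixes g :: "real \<Rightarrow> real"
  assumes g: "set_integrable lborel {a..b} g" and "a \<le> c"
    and zero: "\<And>t. t \<in> {c..b} \<Longrightarrow> (LINT s:{a..t}|lborel. g s) = 0"
  shows "AE s in lborel. s \<in> {c..b} \<longrightarrow> g s = 0"
proof (rule AE_eq_0_if_interval_integrals_eq_0)
  show "set_integrable lborel {c..b} g"
    by (rule set_integrable_subset[OF g]) (use \<open>a \<le> c\<close> in auto)
  fix t assume t: "t \<in> {c..b}"
  have "set_integrable lborel {a..t} g"
    by (rule set_integrable_subset[OF g]) (use t in auto)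
  then have "(LINT s:{a..t}|lborel. g s) = (LINT s:{a..c}|lborel. g s) + (LINT s:{c..t}|lborel. g s)"
    by (rule set_integral_Icc_split) (use t \<open>a \<le> c\<close> in auto)
  then show "(LINT s:{c..t}|lborel. g s) = 0"
    using zero[of t] zero[of c] t by simp
qed

lemma integrable_triangle_product:
  fixes w z :: "real \<Rightarrow> real"
  assumes w: "set_integrable lborel {a..b} w" and z: "continuous_on {a..b} z"
  shows "integrable (lborel \<Otimes>\<^sub>M lborel) (\<lambda>(s, r). if a \<le> s \<and> s \<le> r \<and> r \<le> b then w s * z r else 0)"
proof -
  define W where "W = (\<lambda>s. indicator {a..b} s * w s)"
  define Z where "Z = (\<lambda>r. indicator {a..b} r * z r)"
  have W_int: "integrable lborel W"
    using w unfolding W_def set_integrable_def by simp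
  then have [measurable]: "W \<in> borel_measurable lborel"
    by (rule borel_measurable_integrable)
  have [measurable]: "Z \<in> borel_measurable lborel"
    using borel_measurable_continuous_on_indicator[OF _ z] by (simp add: Z_def)
  obtain M where M: "\<And>r. \<bar>Z r\<bar> \<le> M * indicator {a..b} r"
  proof -
    obtain M where "\<forall>r\<in>{a..b}. \<bar>z r\<bar> \<le> M"
      using compact_imp_bounded[OF compact_continuous_image[OF z compact_Icc]]
      unfolding bounded_iff by auto
    then show thesis
      by (intro that[of M]) (auto simp: Z_def split: split_indicator)
  qed
  define B where "B = (\<lambda>(s, r). \<bar>W s\<bar> * (M * indicator {a..b} r))"
  have B_int: "integrable (lborel \<Otimes>\<^sub>M lborel) B"
  proof (rule lborel_pair.Fubini_integrable)
    show "B \<in> borel_measurable (lborel \<Otimes>\<^sub>M lborel)"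
      unfolding B_def by measurable
    have ind_int: "integrable lborel (\<lambda>r. M * indicator {a..b} r :: real)"
      by (simp add: integrable_indicator_iff emeasure_lborel_Icc_eq)
    have "(\<lambda>s. \<integral>r. norm (B (s, r)) \<partial>lborel) = (\<lambda>s. \<bar>W s\<bar> * \<bar>\<integral>r. M * indicator {a..b} r \<partial>lborel\<bar>)"
      by (simp add: B_def abs_mult)
    then show "integrable lborel (\<lambda>s. \<integral>r. norm (B (s, r)) \<partial>lborel)"
      using W_int by (simp add: integrable_abs)
    show "AE s in lborel. integrable lborel (\<lambda>r. B (s, r))"
      using ind_int by (simp add: B_def)
  qed
  define F where "F = (\<lambda>(s, r). if a \<le> s \<and> s \<le> r \<and> r \<le> b then W s * Z r else 0)"
  have "integrable (lborel \<Otimes>\<^sub>M lborel) F"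
  proof (rule Bochner_Integration.integrable_bound[OF B_int])
    show "F \<in> borel_measurable (lborel \<Otimes>\<^sub>M lborel)"
      unfolding F_def by measurable
    have "\<bar>F (s, r)\<bar> \<le> \<bar>B (s, r)\<bar>" for s r
    proof -
      have "\<bar>F (s, r)\<bar> \<le> \<bar>W s\<bar> * \<bar>Z r\<bar>"
        by (simp add: F_def abs_mult)
      also have "\<dots> \<le> \<bar>W s\<bar> * (M * indicator {a..b} r)"
        by (rule mult_left_mono[OF M]) simp
      finally show ?thesis by (simp add: B_def)
    qed
    then show "AE p in lborel \<Otimes>\<^sub>M lborel. norm (F p) \<le> norm (B p)"
      by (simp add: split_paired_all)
  qed
  moreover have "F = (\<lambda>(s, r). if a \<le> s \<and> s \<le> r \<and> r \<le> b then w s * z r else 0)"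
    by (auto simp: F_def W_def Z_def fun_eq_iff)
  ultimately show ?thesis by simp
qed

lemma set_integral_swap_triangle:
  fixes w z :: "real \<Rightarrow> real"
  assumes w: "set_integrable lborel {a..b} w" and z: "continuous_on {a..b} z"
  shows "(LINT r:{a..b}|lborel. z r * (LINT s:{a..r}|lborel. w s))
       = (LINT s:{a..b}|lborel. w s * (LINT r:{s..b}|lborel. z r))"
proof -
  define F where "F = (\<lambda>(s, r). if a \<le> s \<and> s \<le> r \<and> r \<le> b then w s * z r else (0::real))"
  have inner_s: "(\<integral>s. F (s, r) \<partial>lborel) = indicator {a..b} r * (z r * (LINT s:{a..r}|lborel. w s))" for r
  proof -
    have "(\<lambda>s. F (s, r)) = (\<lambda>s. (indicator {a..b} r * z r) * (indicator {a..r} s * w s))"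
      by (auto simp: F_def fun_eq_iff split: split_indicator)
    then show ?thesis unfolding set_lebesgue_integral_def by simp
  qed
  have inner_r: "(\<integral>r. F (s, r) \<partial>lborel) = indicator {a..b} s * (w s * (LINT r:{s..b}|lborel. z r))" for s
  proof -
    have "(\<lambda>r. F (s, r)) = (\<lambda>r. (indicator {a..b} s * w s) * (indicator {s..b} r * z r))"
      by (auto simp: F_def fun_eq_iff split: split_indicator)
    then show ?thesis unfolding set_lebesgue_integral_def by simp
  qed
  show ?thesis
    using lborel_pair.Fubini_integral[of "\<lambda>s r. F (s, r)"] integrable_triangle_product[OF w z]
    unfolding set_lebesgue_integral_def inner_s inner_r by (simp add: F_def)
qed

lemma hyperbolic_convolution_eq:
  fixes f :: "real \<Rightarrow> real" and k :: real
  assumes f: "continuous_on {0..b} f" and t: "t \<in> {0..b}"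
  defines "P \<equiv> integral {0..t} (\<lambda>\<tau>. cosh (k * \<tau>) * f \<tau>)"
    and "Q \<equiv> integral {0..t} (\<lambda>\<tau>. sinh (k * \<tau>) * f \<tau>)"
  shows "(LINT \<tau>:{0..t}|lborel. cosh (k * (t - \<tau>)) * f \<tau>) = cosh (k * t) * P - sinh (k * t) * Q"
    and "(LINT \<tau>:{0..t}|lborel. sinh (k * (t - \<tau>)) * f \<tau>) = sinh (k * t) * P - cosh (k * t) * Q"
proof -
  have f_t: "continuous_on {0..t} f"
    by (rule continuous_on_subset[OF f]) (use t in auto)
  have int_P: "(\<lambda>\<tau>. cosh (k * \<tau>) * f \<tau>) integrable_on {0..t}"
    and int_Q: "(\<lambda>\<tau>. sinh (k * \<tau>) * f \<tau>) integrable_on {0..t}"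
    by (intro integrable_continuous_interval continuous_intros f_t)+
  have expand: "(LINT \<tau>:{0..t}|lborel. (A * cosh (k * \<tau>) + B * sinh (k * \<tau>)) * f \<tau>) = A * P + B * Q"
    for A B
  proof -
    have "continuous_on {0..t} (\<lambda>\<tau>. (A * cosh (k * \<tau>) + B * sinh (k * \<tau>)) * f \<tau>)"
      by (intro continuous_intros f_t)
    then have "(LINT \<tau>:{0..t}|lborel. (A * cosh (k * \<tau>) + B * sinh (k * \<tau>)) * f \<tau>)
        = integral {0..t} (\<lambda>\<tau>. A * (cosh (k * \<tau>) * f \<tau>) + B * (sinh (k * \<tau>) * f \<tau>))"
      by (simp add: set_borel_integral_eq_integral(2) borel_integrable_atLeastAtMost' algebra_simps)
    also have "\<dots> = A * P + B * Q"
      unfolding P_def Q_def by (subst integral_add) (auto intro: integrable_on_mult_right int_P int_Q)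
    finally show ?thesis .
  qed
  show "(LINT \<tau>:{0..t}|lborel. cosh (k * (t - \<tau>)) * f \<tau>) = cosh (k * t) * P - sinh (k * t) * Q"
    using expand[of "cosh (k * t)" "- sinh (k * t)"]
    by (simp add: right_diff_distrib cosh_diff algebra_simps)
  show "(LINT \<tau>:{0..t}|lborel. sinh (k * (t - \<tau>)) * f \<tau>) = sinh (k * t) * P - cosh (k * t) * Q"
    using expand[of "sinh (k * t)" "- cosh (k * t)"]
    by (simp add: right_diff_distrib sinh_diff algebra_simps)
qed

lemma hyperbolic_convolution_has_derivative:
  fixes f :: "real \<Rightarrow> real" and k :: real
  assumes f: "continuous_on {0..b} f" and t: "t \<in> {0..b}"
  defines "C \<equiv> \<lambda>t. LINT \<tau>:{0..t}|lborel. cosh (k * (t - \<tau>)) * f \<tau>"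
    and "S \<equiv> \<lambda>t. LINT \<tau>:{0..t}|lborel. sinh (k * (t - \<tau>)) * f \<tau>"
  shows "(C has_real_derivative f t + k * S t) (at t within {0..b})"
    and "(S has_real_derivative k * C t) (at t within {0..b})"
proof -
  define P where "P = (\<lambda>t. integral {0..t} (\<lambda>\<tau>. cosh (k * \<tau>) * f \<tau>))"
  define Q where "Q = (\<lambda>t. integral {0..t} (\<lambda>\<tau>. sinh (k * \<tau>) * f \<tau>))"
  have C_eq: "C s = cosh (k * s) * P s - sinh (k * s) * Q s"
    and S_eq: "S s = sinh (k * s) * P s - cosh (k * s) * Q s" if "s \<in> {0..b}" for s
    unfolding C_def S_def P_def Q_def using hyperbolic_convolution_eq[OF f that] by simp_all
  have P': "(P has_real_derivative cosh (k * t) * f t) (at t within {0..b})"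
    and Q': "(Q has_real_derivative sinh (k * t) * f t) (at t within {0..b})"
    unfolding P_def Q_def using t
    by (auto intro!: integral_has_real_derivative continuous_intros f)
  have cosh': "((\<lambda>t. cosh (k * t)) has_real_derivative k * sinh (k * t)) (at t within {0..b})"
    and sinh': "((\<lambda>t. sinh (k * t)) has_real_derivative k * cosh (k * t)) (at t within {0..b})"
    by (auto intro!: derivative_eq_intros)
  have "((\<lambda>t. cosh (k * t) * P t - sinh (k * t) * Q t) has_real_derivative
      k * sinh (k * t) * P t + cosh (k * t) * f t * cosh (k * t)
      - (k * cosh (k * t) * Q t + sinh (k * t) * f t * sinh (k * t))) (at t within {0..b})"
    by (intro DERIV_diff DERIV_mult cosh' sinh' P' Q')
  then have "(C has_real_derivative k * sinh (k * t) * P t + cosh (k * t) * f t * cosh (k * t)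
      - (k * cosh (k * t) * Q t + sinh (k * t) * f t * sinh (k * t))) (at t within {0..b})"
    by (rule has_field_derivative_transform_within[OF _ zero_less_one t]) (simp add: C_eq)
  moreover have "cosh (k * t) * cosh (k * t) = 1 + sinh (k * t) * sinh (k * t)"
    using cosh_square_eq[of "k * t"] by (simp add: power2_eq_square)
  then have "k * sinh (k * t) * P t + cosh (k * t) * f t * cosh (k * t)
      - (k * cosh (k * t) * Q t + sinh (k * t) * f t * sinh (k * t)) = f t + k * S t"
    by (simp add: S_eq[OF t] algebra_simps)
  ultimately show "(C has_real_derivative f t + k * S t) (at t within {0..b})"
    by simp
  have "((\<lambda>t. sinh (k * t) * P t - cosh (k * t) * Q t) has_real_derivative
      k * cosh (k * t) * P t + cosh (k * t) * f t * sinh (k * t)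
      - (k * sinh (k * t) * Q t + sinh (k * t) * f t * cosh (k * t))) (at t within {0..b})"
    by (intro DERIV_diff DERIV_mult cosh' sinh' P' Q')
  then have "(S has_real_derivative k * cosh (k * t) * P t + cosh (k * t) * f t * sinh (k * t)
      - (k * sinh (k * t) * Q t + sinh (k * t) * f t * cosh (k * t))) (at t within {0..b})"
    by (rule has_field_derivative_transform_within[OF _ zero_less_one t]) (simp add: S_eq)
  moreover have "k * cosh (k * t) * P t + cosh (k * t) * f t * sinh (k * t)
      - (k * sinh (k * t) * Q t + sinh (k * t) * f t * cosh (k * t)) = k * C t"
    by (simp add: C_eq[OF t] algebra_simps)
  ultimately show "(S has_real_derivative k * C t) (at t within {0..b})"
    by simp
qed

section \<open>Square-integrable functions\<close>

lemma L2_on_cong: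
  assumes "L2_on S g" and "\<And>t. t \<in> S \<Longrightarrow> f t = g t"
  shows "L2_on S f"
proof -
  have "(\<lambda>t. indicator S t *\<^sub>R f t) = (\<lambda>t. indicator S t *\<^sub>R g t)"
    using assms(2) by (auto simp: fun_eq_iff split: split_indicator)
  with assms show ?thesis
    unfolding L2_on_def set_borel_measurable_def
    by (auto intro: set_integrable_cong_on)
qed

lemma L2_on_subset:
  "L2_on S f \<Longrightarrow> T \<in> sets lborel \<Longrightarrow> T \<subseteq> S \<Longrightarrow> L2_on T f"
  unfolding L2_on_def by (blast intro: set_borel_measurable_subset set_integrable_subset)

lemma L2_on_Un:
  assumes f: "L2_on A f" "L2_on B f" and sets: "A \<in> sets lborel" "B \<in> sets lborel"
  shows "L2_on (A \<union> B) f"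
proof -
  have "(\<lambda>t. indicator (A \<union> B) t *\<^sub>R f t)
      = (\<lambda>t. indicator A t *\<^sub>R f t + indicator B t *\<^sub>R f t - indicator B t * (indicator A t *\<^sub>R f t))"
    by (auto simp: fun_eq_iff split: split_indicator)
  moreover have "(\<lambda>t. indicator A t *\<^sub>R f t) \<in> borel_measurable lborel"
    "(\<lambda>t. indicator B t *\<^sub>R f t) \<in> borel_measurable lborel"
    using f unfolding L2_on_def set_borel_measurable_def by auto
  ultimately have "set_borel_measurable lborel (A \<union> B) f"
    unfolding set_borel_measurable_def using sets by simp
  then show ?thesis
    using f sets unfolding L2_on_def by (auto intro: set_integrable_Un)
qed

lemma L2_on_mult_integrable:
  assumes f: "L2_on S f" and g: "L2_on S g"
  shows "set_integrable lborel S (\<lambda>t. f t * g t)"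
proof (rule set_integrable_bound)
  show "set_integrable lborel S (\<lambda>t. (f t)^2 + (g t)^2)"
    using f g unfolding L2_on_def by (auto intro: set_integral_add)
  have "(\<lambda>t. indicator S t *\<^sub>R (f t * g t)) = (\<lambda>t. (indicator S t *\<^sub>R f t) * (indicator S t *\<^sub>R g t))"
    by (auto simp: fun_eq_iff split: split_indicator)
  moreover have "(\<lambda>t. indicator S t *\<^sub>R f t) \<in> borel_measurable lborel"
    "(\<lambda>t. indicator S t *\<^sub>R g t) \<in> borel_measurable lborel"
    using f g unfolding L2_on_def set_borel_measurable_def by auto
  ultimately show "set_borel_measurable lborel S (\<lambda>t. f t * g t)"
    unfolding set_borel_measurable_def by simp
  have "\<bar>u * v\<bar> \<le> u^2 + v^2" for u v :: real
  proof -
    have "0 \<le> (\<bar>u\<bar> - \<bar>v\<bar>)^2" by simp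
    then have "2 * (\<bar>u\<bar> * \<bar>v\<bar>) \<le> u^2 + v^2" by (simp add: power2_diff)
    moreover have "0 \<le> \<bar>u\<bar> * \<bar>v\<bar>" by simp
    ultimately show ?thesis unfolding abs_mult by linarith
  qed
  then show "AE t in lborel. t \<in> S \<longrightarrow> norm (f t * g t) \<le> norm ((f t)^2 + (g t)^2)"
    by simp
qed

lemma L2_on_imp_set_integrable:
  assumes f: "L2_on S f" and S: "S \<in> sets lborel" "emeasure lborel S < \<infinity>"
  shows "set_integrable lborel S f"
proof -
  have "L2_on S (\<lambda>_. 1)"
    using S by (simp add: L2_on_def set_integrable_def integrable_indicator_iff set_borel_measurable_def)
  from L2_on_mult_integrable[OF f this] show ?thesis by simp
qed

lemma L2_on_cmult:
  assumes "L2_on S f"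
  shows "L2_on S (\<lambda>t. c * f t)"
proof -
  have "(\<lambda>t. indicator S t *\<^sub>R (c * f t)) = (\<lambda>t. c * (indicator S t *\<^sub>R f t))"
    by (simp add: fun_eq_iff)
  with assms show ?thesis
    unfolding L2_on_def set_borel_measurable_def
    by (auto simp: power_mult_distrib intro: set_integrable_mult_right)
qed

lemma L2_on_diff:
  assumes f: "L2_on S f" and g: "L2_on S g"
  shows "L2_on S (\<lambda>t. f t - g t)"
proof -
  have "set_integrable lborel S (\<lambda>t. (f t)^2 - 2 * (f t * g t) + (g t)^2)"
    using f g L2_on_mult_integrable[OF f g] unfolding L2_on_def
    by (intro set_integral_add set_integral_diff set_integrable_mult_right) auto
  moreover have "(\<lambda>t. indicator S t *\<^sub>R (f t - g t))
      = (\<lambda>t. indicator S t *\<^sub>R f t - indicator S t *\<^sub>R g t)"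
    by (auto simp: fun_eq_iff split: split_indicator)
  moreover have "(\<lambda>t. indicator S t *\<^sub>R f t) \<in> borel_measurable lborel"
    "(\<lambda>t. indicator S t *\<^sub>R g t) \<in> borel_measurable lborel"
    using f g unfolding L2_on_def set_borel_measurable_def by auto
  ultimately show ?thesis
    unfolding L2_on_def set_borel_measurable_def
    by (simp add: power2_diff algebra_simps)
qed

lemma L2_on_continuous: "continuous_on {a..b} f \<Longrightarrow> L2_on {a..b} f"
  unfolding L2_on_def
  by (auto intro!: borel_integrable_atLeastAtMost' set_borel_measurable_if_set_integrable
      continuous_intros)

lemma L2_on_shift:
  assumes f: "L2_on A f" and AB: "\<And>t. t \<in> B \<longleftrightarrow> t - d \<in> A"
  shows "L2_on B (\<lambda>t. f (t - d))"
proof -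
  have "(\<lambda>t. indicator B t *\<^sub>R f (t - d)) = (\<lambda>t. indicator A t *\<^sub>R f t) \<circ> (\<lambda>t. t - d)"
    using AB by (auto simp: fun_eq_iff split: split_indicator)
  moreover have "(\<lambda>t. indicator A t *\<^sub>R f t) \<in> borel_measurable lborel"
    using f unfolding L2_on_def set_borel_measurable_def by auto
  ultimately have "set_borel_measurable lborel B (\<lambda>t. f (t - d))"
    unfolding set_borel_measurable_def by (simp add: measurable_comp)
  then show ?thesis
    using f set_integral_shift(2)[OF AB, of "\<lambda>t. (f t)^2"] unfolding L2_on_def by simp
qed

lemma L2_norm_le_if_orthogonal:
  assumes u: "L2_on S u" and v: "L2_on S v"
    and orth: "(LINT t:S|lborel. v t * (u t - v t)) = 0"
  shows "L2_norm_on S v \<le> L2_norm_on S u"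
    and "L2_norm_on S u \<le> L2_norm_on S v \<Longrightarrow> AE t in lborel. t \<in> S \<longrightarrow> u t = v t"
proof -
  have uv: "L2_on S (\<lambda>t. u t - v t)"
    by (rule L2_on_diff[OF u v])
  have sq_uv: "set_integrable lborel S (\<lambda>t. (u t - v t)^2)"
    using uv by (simp add: L2_on_def)
  have cross: "set_integrable lborel S (\<lambda>t. v t * (u t - v t))"
    by (rule L2_on_mult_integrable[OF v uv])
  have "(\<lambda>t. (u t)^2) = (\<lambda>t. (v t)^2 + 2 * (v t * (u t - v t)) + (u t - v t)^2)"
    by (simp add: fun_eq_iff power2_eq_square algebra_simps)
  then have "(LINT t:S|lborel. (u t)^2)
      = (LINT t:S|lborel. (v t)^2 + 2 * (v t * (u t - v t)) + (u t - v t)^2)"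
    by simp
  also have "\<dots> = (LINT t:S|lborel. (v t)^2) + (LINT t:S|lborel. (u t - v t)^2)"
    using v sq_uv cross orth unfolding L2_on_def
    by (simp add: set_integral_add set_integrable_mult_right)
  finally have pyth: "(LINT t:S|lborel. (u t)^2)
      = (LINT t:S|lborel. (v t)^2) + (LINT t:S|lborel. (u t - v t)^2)" .
  have nonneg: "0 \<le> (LINT t:S|lborel. (u t - v t)^2)"
    unfolding set_lebesgue_integral_def by (rule Bochner_Integration.integral_nonneg) simp
  then show "L2_norm_on S v \<le> L2_norm_on S u"
    unfolding L2_norm_on_def pyth by simp
  assume "L2_norm_on S u \<le> L2_norm_on S v"
  then have "(LINT t:S|lborel. (u t - v t)^2) = 0"
    using nonneg unfolding L2_norm_on_def pyth by simp
  then have "AE t in lborel. indicator S t *\<^sub>R (u t - v t)^2 = 0"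
    using sq_uv integral_nonneg_eq_0_iff_AE[of lborel "\<lambda>t. indicator S t *\<^sub>R (u t - v t)^2"]
    unfolding set_integrable_def set_lebesgue_integral_def by simp
  then show "AE t in lborel. t \<in> S \<longrightarrow> u t = v t"
    by eventually_elim (auto split: split_indicator)
qed

section \<open>The retarded control system\<close>

lemma dde_integrand_integrable:
  assumes x0: "L2_on {-1..<0} x0" and u: "L2_on {0..T} u" and x: "continuous_on {0..T} x"
  shows "set_integrable lborel {0..T} (\<lambda>s. a * (if s < 1 then x0 (s - 1) else x (s - 1)) + u s)"
proof -
  have "L2_on {0..<1} (\<lambda>s. x0 (s - 1))"
    by (rule L2_on_shift[OF x0]) auto
  then have "set_integrable lborel {0..<1} (\<lambda>s. x0 (s - 1))"
    by (rule L2_on_imp_set_integrable) auto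
  then have early: "set_integrable lborel {0..<1} (\<lambda>s. if s < 1 then x0 (s - 1) else x (s - 1))"
    by (rule set_integrable_cong_on) auto
  have "continuous_on {1..T} (\<lambda>s. x (s - 1))"
    by (intro continuous_on_compose2[OF x] continuous_intros) auto
  then have "set_integrable lborel {1..T} (\<lambda>s. if s < 1 then x0 (s - 1) else x (s - 1))"
    by (intro set_integrable_cong_on[OF borel_integrable_atLeastAtMost']) auto
  with early have "set_integrable lborel ({0..<1} \<union> {1..T})
      (\<lambda>s. if s < 1 then x0 (s - 1) else x (s - 1))"
    by (rule set_integrable_Un) auto
  then have "set_integrable lborel {0..T} (\<lambda>s. if s < 1 then x0 (s - 1) else x (s - 1))"
    by (rule set_integrable_subset) auto
  moreover have "set_integrable lborel {0..T} u"
    by (rule L2_on_imp_set_integrable[OF u]) (auto simp: emeasure_lborel_Icc_eq)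
  ultimately show ?thesis
    by (intro set_integral_add(1) set_integrable_mult_right)
qed

lemma dde_sol_diff:
  assumes x: "dde_sol a y x0 u T x" and z: "dde_sol a y x0 v T z"
    and x0: "L2_on {-1..<0} x0" and u: "L2_on {0..T} u" and v: "L2_on {0..T} v"
  defines "g \<equiv> \<lambda>s. a * (if s < 1 then 0 else x (s - 1) - z (s - 1)) + (u s - v s)"
  shows "set_integrable lborel {0..T} g"
    and "\<And>t. t \<in> {0..T} \<Longrightarrow> x t - z t = (LINT s:{0..t}|lborel. g s)"
proof -
  define gx where "gx = (\<lambda>s. a * (if s < 1 then x0 (s - 1) else x (s - 1)) + u s)"
  define gz where "gz = (\<lambda>s. a * (if s < 1 then x0 (s - 1) else z (s - 1)) + v s)"
  have gx: "set_integrable lborel {0..T} gx" and gz: "set_integrable lborel {0..T} gz"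
    using x z unfolding gx_def gz_def dde_sol_def
    by (auto intro!: dde_integrand_integrable x0 u v)
  have g_eq: "g = (\<lambda>s. gx s - gz s)"
    by (simp add: g_def gx_def gz_def fun_eq_iff algebra_simps)
  show "set_integrable lborel {0..T} g"
    unfolding g_eq by (rule set_integral_diff(1)[OF gx gz])
  fix t assume t: "t \<in> {0..T}"
  have "set_integrable lborel {0..t} gx" "set_integrable lborel {0..t} gz"
    using t by (auto intro: set_integrable_subset[OF gx] set_integrable_subset[OF gz])
  then show "x t - z t = (LINT s:{0..t}|lborel. g s)"
    using x z t unfolding g_eq dde_sol_def gx_def gz_def by (simp add: set_integral_diff(2))
qed

section \<open>The minimum energy control\<close>

locale min_energy_problem =
  fixes a1 \<epsilon> y :: real and x0 :: "real \<Rightarrow> real"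
  assumes a1_nonzero: "a1 \<noteq> 0" and eps_pos: "0 < \<epsilon>" and eps_less_1: "\<epsilon> < 1"
    and x0_L2: "L2_on {-1..<0} x0"
begin

text \<open>In the notation of the paper, x_free is the trajectory x~ of the uncontrolled part, c_opt is
  c, u_opt0 is u^_0 and u_opt is u^; x_opt is the optimal trajectory, which is 0 after eps.\<close>

definition x_free :: "real \<Rightarrow> real" where
  "x_free = (\<lambda>t. y + a1 * (LINT \<tau>:{0..t}|lborel. x0 (\<tau> - 1)))"

definition c_opt :: real where
  "c_opt = - a1 / sinh (a1 * \<epsilon>) *
     (x_free \<epsilon> + a1 * (LINT \<tau>:{0..\<epsilon>}|lborel. sinh (a1 * (\<epsilon> - \<tau>)) * x_free \<tau>))"

definition u_opt0 :: "real \<Rightarrow> real" where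
  "u_opt0 = (\<lambda>t. c_opt * cosh (a1 * t) + a1^2 * (LINT \<tau>:{0..t}|lborel. cosh (a1 * (t - \<tau>)) * x_free \<tau>))"

definition x_opt :: "real \<Rightarrow> real" where
  "x_opt = (\<lambda>t. if t \<le> \<epsilon> then x_free t + (LINT \<tau>:{0..t}|lborel. u_opt0 \<tau>) else 0)"

definition u_opt :: "real \<Rightarrow> real" where
  "u_opt = (\<lambda>t. if 0 \<le> t \<and> t < \<epsilon> then u_opt0 t
     else if \<epsilon> \<le> t \<and> t < 1 then - a1 * x0 (t - 1)
     else if 1 \<le> t \<and> t < 1 + \<epsilon> then - a1 * (x_free (t - 1) + (LINT \<tau>:{0..t - 1}|lborel. u_opt0 \<tau>))
     else 0)"

lemma L2_x0_shift: "L2_on {0..<1} (\<lambda>s. x0 (s - 1))"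
  by (rule L2_on_shift[OF x0_L2]) auto

lemma integrable_x0_shift: "set_integrable lborel {0..1} (\<lambda>s. x0 (s - 1))"
proof -
  have "set_integrable lborel {0..<1} (\<lambda>s. x0 (s - 1))"
    by (rule L2_on_imp_set_integrable[OF L2_x0_shift]) auto
  then have "set_integrable lborel ({0..<1} \<union> {1}) (\<lambda>s. x0 (s - 1))"
    by (rule set_integrable_Un) auto
  then show ?thesis
    by (rule set_integrable_subset) auto
qed

lemma continuous_x_free: "continuous_on {0..1} x_free"
  unfolding x_free_def
  by (intro continuous_intros continuous_on_set_integral_primitive integrable_x0_shift)

lemma u_opt0_primitive:
  assumes t: "t \<in> {0..1}"
  shows "(LINT \<tau>:{0..t}|lborel. u_opt0 \<tau>)
       = (c_opt * sinh (a1 * t) + a1^2 * (LINT \<tau>:{0..t}|lborel. sinh (a1 * (t - \<tau>)) * x_free \<tau>)) / a1"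
    and "(u_opt0 has_real_derivative a1^2 * (x_free t + (LINT \<tau>:{0..t}|lborel. u_opt0 \<tau>)))
      (at t within {0..1})"
proof -
  define C where "C = (\<lambda>t. LINT \<tau>:{0..t}|lborel. cosh (a1 * (t - \<tau>)) * x_free \<tau>)"
  define S where "S = (\<lambda>t. LINT \<tau>:{0..t}|lborel. sinh (a1 * (t - \<tau>)) * x_free \<tau>)"
  define G where "G = (\<lambda>t. (c_opt * sinh (a1 * t) + a1^2 * S t) / a1)"
  have C': "(C has_real_derivative x_free s + a1 * S s) (at s within {0..1})"
    and S': "(S has_real_derivative a1 * C s) (at s within {0..1})" if "s \<in> {0..1}" for s
    using hyperbolic_convolution_has_derivative[OF continuous_x_free that, of a1]
    unfolding C_def S_def by auto
  have u_opt0_eq: "u_opt0 = (\<lambda>t. c_opt * cosh (a1 * t) + a1^2 * C t)"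
    by (simp add: u_opt0_def C_def)
  have G': "(G has_real_derivative u_opt0 s) (at s within {0..1})" if "s \<in> {0..1}" for s
    unfolding G_def
    by (rule derivative_eq_intros S'[OF that] refl)+
      (use a1_nonzero in \<open>simp_all add: u_opt0_eq field_simps power2_eq_square\<close>)
  have u_opt0': "(u_opt0 has_real_derivative a1^2 * (x_free s + G s)) (at s within {0..1})"
    if "s \<in> {0..1}" for s
    unfolding u_opt0_eq
    by (rule derivative_eq_intros C'[OF that] refl)+
      (use a1_nonzero in \<open>simp_all add: G_def field_simps power2_eq_square\<close>)
  have cont_u_opt0: "continuous_on {0..1} u_opt0"
    using u_opt0' by (rule DERIV_continuous_on)
  have "(u_opt0 has_integral (G t - G 0)) {0..t}"
  proof (rule fundamental_theorem_of_calculus)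
    show "0 \<le> t" using t by simp
    show "(G has_vector_derivative u_opt0 s) (at s within {0..t})" if "s \<in> {0..t}" for s
      using G'[of s] that t
      by (auto simp: has_real_derivative_iff_has_vector_derivative
          intro: has_vector_derivative_within_subset)
  qed
  moreover have "set_integrable lborel {0..t} u_opt0"
    by (rule borel_integrable_atLeastAtMost', rule continuous_on_subset[OF cont_u_opt0]) (use t in auto)
  ultimately have primitive: "(LINT \<tau>:{0..t}|lborel. u_opt0 \<tau>) = G t"
    by (simp add: set_borel_integral_eq_integral(2) integral_unique G_def S_def)
  then show "(LINT \<tau>:{0..t}|lborel. u_opt0 \<tau>)
       = (c_opt * sinh (a1 * t) + a1^2 * (LINT \<tau>:{0..t}|lborel. sinh (a1 * (t - \<tau>)) * x_free \<tau>)) / a1"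
    by (simp add: G_def S_def)
  show "(u_opt0 has_real_derivative a1^2 * (x_free t + (LINT \<tau>:{0..t}|lborel. u_opt0 \<tau>)))
      (at t within {0..1})"
    using u_opt0'[OF t] primitive by simp
qed

lemma continuous_u_opt0: "continuous_on {0..1} u_opt0"
  using u_opt0_primitive(2) by (rule DERIV_continuous_on)

text \<open>This is what the constant c_opt is chosen for.\<close>

lemma x_opt_eps: "x_opt \<epsilon> = 0"
proof -
  have "sinh (a1 * \<epsilon>) \<noteq> 0"
    using a1_nonzero eps_pos by simp
  then show ?thesis
    using a1_nonzero eps_pos eps_less_1
    by (simp add: x_opt_def u_opt0_primitive(1) c_opt_def field_simps power2_eq_square)
qed

lemma continuous_x_opt: "continuous_on {0..1 + \<epsilon>} x_opt"
proof -
  have "continuous_on {0..1} (\<lambda>t. LINT \<tau>:{0..t}|lborel. u_opt0 \<tau>)"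
    by (intro continuous_on_set_integral_primitive borel_integrable_atLeastAtMost' continuous_u_opt0)
  then have "continuous_on {0..1} (\<lambda>t. x_free t + (LINT \<tau>:{0..t}|lborel. u_opt0 \<tau>))"
    by (intro continuous_intros continuous_x_free)
  then have early: "continuous_on {t \<in> {0..1 + \<epsilon>}. t \<le> \<epsilon>}
      (\<lambda>t. x_free t + (LINT \<tau>:{0..t}|lborel. u_opt0 \<tau>))"
    by (rule continuous_on_subset) (use eps_less_1 in auto)
  show ?thesis
    unfolding x_opt_def
    by (rule continuous_on_cases_le[OF early continuous_on_const continuous_on_id])
      (use x_opt_eps in \<open>simp add: x_opt_def\<close>)
qed

lemma u_opt0_has_derivative:
  assumes "s \<in> {0..\<epsilon>}"
  shows "(u_opt0 has_real_derivative a1^2 * x_opt s) (at s within {0..1})"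
  using u_opt0_primitive(2)[of s] assms eps_less_1 by (simp add: x_opt_def)

lemma integral_x_opt:
  assumes s: "s \<in> {0..\<epsilon>}"
  shows "a1^2 * (LINT r:{s..\<epsilon>}|lborel. x_opt r) = u_opt0 \<epsilon> - u_opt0 s"
proof -
  have "(x_opt has_integral (u_opt0 \<epsilon> / a1^2 - u_opt0 s / a1^2)) {s..\<epsilon>}"
  proof (rule fundamental_theorem_of_calculus)
    show "s \<le> \<epsilon>" using s by simp
    fix r assume r: "r \<in> {s..\<epsilon>}"
    then have "((\<lambda>t. u_opt0 t / a1^2) has_real_derivative x_opt r) (at r within {0..1})"
      using DERIV_cdivide[OF u_opt0_has_derivative, of r "a1^2"] s a1_nonzero by simp
    then show "((\<lambda>t. u_opt0 t / a1^2) has_vector_derivative x_opt r) (at r within {s..\<epsilon>})"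
      unfolding has_real_derivative_iff_has_vector_derivative
      by (rule has_vector_derivative_within_subset) (use s eps_less_1 in auto)
  qed
  moreover have "set_integrable lborel {s..\<epsilon>} x_opt"
    by (rule borel_integrable_atLeastAtMost', rule continuous_on_subset[OF continuous_x_opt])
      (use s in auto)
  ultimately show ?thesis
    using a1_nonzero
    by (simp add: set_borel_integral_eq_integral(2) integral_unique field_simps)
qed

lemma u_opt_initial: "t \<in> {0..<\<epsilon>} \<Longrightarrow> u_opt t = u_opt0 t"
  by (simp add: u_opt_def)

lemma u_opt_middle: "t \<in> {\<epsilon>..<1} \<Longrightarrow> u_opt t = - a1 * x0 (t - 1)"
  by (simp add: u_opt_def)

text \<open>At t = 1 + eps the definition of u_opt gives 0, which fits because x_opt eps = 0.\<close>

lemma u_opt_final: "t \<in> {1..1 + \<epsilon>} \<Longrightarrow> u_opt t = - a1 * x_opt (t - 1)"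
  using eps_pos eps_less_1 x_opt_eps by (auto simp: u_opt_def x_opt_def)

lemma L2_u_opt: "L2_on {0..1 + \<epsilon>} u_opt"
proof -
  have "L2_on {0..<\<epsilon>} u_opt0"
    by (rule L2_on_subset[OF L2_on_continuous[OF continuous_u_opt0]]) (use eps_less_1 in auto)
  then have initial: "L2_on {0..<\<epsilon>} u_opt"
    by (rule L2_on_cong) (simp add: u_opt_initial)
  have "L2_on {\<epsilon>..<1} (\<lambda>t. - a1 * x0 (t - 1))"
    by (rule L2_on_subset[OF L2_on_cmult[OF L2_x0_shift]]) (use eps_pos in auto)
  then have middle: "L2_on {\<epsilon>..<1} u_opt"
    by (rule L2_on_cong) (simp add: u_opt_middle)
  have "continuous_on {1..1 + \<epsilon>} (\<lambda>t. - a1 * x_opt (t - 1))"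
    by (intro continuous_intros continuous_on_compose2[OF continuous_x_opt]) auto
  then have final: "L2_on {1..1 + \<epsilon>} u_opt"
    by (rule L2_on_cong[OF L2_on_continuous]) (simp add: u_opt_final)
  have "{0..1 + \<epsilon>} = ({0..<\<epsilon>} \<union> {\<epsilon>..<1}) \<union> {1..1 + \<epsilon>}"
    using eps_pos eps_less_1 by auto
  then show ?thesis
    using initial middle final by (simp add: L2_on_Un)
qed

lemma x_opt_weighted_primitive:
  assumes w: "L2_on {0..\<epsilon>} w"
  shows "a1^2 * (LINT r:{0..\<epsilon>}|lborel. x_opt r * (LINT s:{0..r}|lborel. w s))
       = u_opt0 \<epsilon> * (LINT s:{0..\<epsilon>}|lborel. w s) - (LINT s:{0..\<epsilon>}|lborel. u_opt0 s * w s)"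
proof -
  have w_int: "set_integrable lborel {0..\<epsilon>} w"
    by (rule L2_on_imp_set_integrable[OF w]) (auto simp: emeasure_lborel_Icc_eq)
  have u_opt0_w_int: "set_integrable lborel {0..\<epsilon>} (\<lambda>s. u_opt0 s * w s)"
  proof (rule L2_on_mult_integrable[OF _ w])
    show "L2_on {0..\<epsilon>} u_opt0"
      by (rule L2_on_continuous, rule continuous_on_subset[OF continuous_u_opt0]) (use eps_less_1 in auto)
  qed
  have "a1^2 * (LINT r:{0..\<epsilon>}|lborel. x_opt r * (LINT s:{0..r}|lborel. w s))
      = a1^2 * (LINT s:{0..\<epsilon>}|lborel. w s * (LINT r:{s..\<epsilon>}|lborel. x_opt r))"
    by (subst set_integral_swap_triangle[OF w_int]) 
      (auto intro: continuous_on_subset[OF continuous_x_opt])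
  also have "\<dots> = (LINT s:{0..\<epsilon>}|lborel. w s * (a1^2 * (LINT r:{s..\<epsilon>}|lborel. x_opt r)))"
    by (simp add: mult.left_commute flip: set_integral_mult_right)
  also have "\<dots> = (LINT s:{0..\<epsilon>}|lborel. u_opt0 \<epsilon> * w s - u_opt0 s * w s)"
    by (rule set_lebesgue_integral_cong) (auto simp: integral_x_opt algebra_simps)
  also have "\<dots> = u_opt0 \<epsilon> * (LINT s:{0..\<epsilon>}|lborel. w s) - (LINT s:{0..\<epsilon>}|lborel. u_opt0 s * w s)"
    using w_int u_opt0_w_int by (simp add: set_integral_diff set_integrable_mult_right)
  finally show ?thesis .
qed

lemma x_opt_vanishes: "\<epsilon> \<le> t \<Longrightarrow> x_opt t = 0"
  using x_opt_eps by (cases "t = \<epsilon>") (auto simp: x_opt_def)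

lemma dde_sol_x_opt: "dde_sol a1 y x0 u_opt (1 + \<epsilon>) x_opt"
  unfolding dde_sol_def
proof (intro conjI ballI continuous_x_opt)
  fix t assume t: "t \<in> {0..1 + \<epsilon>}"
  define k where "k = (\<lambda>s. a1 * x0 (s - 1) + u_opt0 s)"
  define g where "g = (\<lambda>s. a1 * (if s < 1 then x0 (s - 1) else x_opt (s - 1)) + u_opt s)"
  have sub: "{0..\<epsilon>} \<subseteq> {0..1}" using eps_less_1 by auto
  have x0_int: "set_integrable lborel {0..\<epsilon>} (\<lambda>s. x0 (s - 1))"
    by (rule set_integrable_subset[OF integrable_x0_shift]) (use sub in auto)
  have u_opt0_int: "set_integrable lborel {0..\<epsilon>} u_opt0"
    by (rule borel_integrable_atLeastAtMost', rule continuous_on_subset[OF continuous_u_opt0 sub])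
  have k_int: "set_integrable lborel {0..\<epsilon>} k"
    unfolding k_def by (intro set_integral_add(1) set_integrable_mult_right x0_int u_opt0_int)
  have x_opt_k: "x_opt r = y + (LINT s:{0..r}|lborel. k s)" if "r \<in> {0..\<epsilon>}" for r
    using that set_integrable_subset[OF x0_int, of "{0..r}"]
      set_integrable_subset[OF u_opt0_int, of "{0..r}"]
    by (simp add: x_opt_def x_free_def k_def set_integral_add(2) set_integrable_mult_right)
  have g_early: "g s = k s" if "s \<in> {0..<\<epsilon>}" for s
    using that eps_less_1 by (simp add: g_def k_def u_opt_initial)
  have g_late: "g s = 0" if "s \<in> {\<epsilon>..1 + \<epsilon>}" for s
    using that by (cases "s < 1") (auto simp: g_def u_opt_middle u_opt_final)
  have g_int: "set_integrable lborel {0..\<epsilon>} g" and g_eq: "(LINT s:{0..\<epsilon>}|lborel. g s) = x_opt \<epsilon> - y"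
    using set_integral_Icc_cong_Ico[OF k_int g_early] x_opt_k[of \<epsilon>] eps_pos by auto
  show "x_opt t = y + (LINT s:{0..t}|lborel. g s)"
  proof (cases "t \<le> \<epsilon>")
    case True
    have "set_integrable lborel {0..t} k"
      by (rule set_integrable_subset[OF k_int]) (use True in auto)
    then show ?thesis
      using set_integral_Icc_cong_Ico(2)[of 0 t k g] g_early x_opt_k[of t] True t by auto
  next
    case False
    have "set_integrable lborel {\<epsilon>..t} g"
      by (rule set_integrable_cong_on[where g="\<lambda>_. 0"]) (use t g_late in \<open>auto simp: set_integrable_def\<close>)
    with g_int have "set_integrable lborel {0..t} g"
      using set_integrable_Un[of lborel "{0..\<epsilon>}" g "{\<epsilon>..t}"] False eps_pos
      by (simp add: ivl_disj_un_two_touch)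
    then have "(LINT s:{0..t}|lborel. g s) = (LINT s:{0..\<epsilon>}|lborel. g s) + (LINT s:{\<epsilon>..t}|lborel. g s)"
      by (rule set_integral_Icc_split) (use False eps_pos in auto)
    moreover have "(LINT s:{\<epsilon>..t}|lborel. g s) = (LINT s:{\<epsilon>..t}|lborel. 0)"
      by (rule set_lebesgue_integral_cong) (use t g_late in auto)
    ultimately show ?thesis
      using g_eq False x_opt_vanishes[of t] x_opt_eps by simp
  qed
qed

lemma admissible_u_opt: "admissible a1 (1 + \<epsilon>) y x0 u_opt"
  unfolding admissible_def using L2_u_opt dde_sol_x_opt x_opt_vanishes by auto

lemma admissible_deviation:
  assumes adm: "admissible a1 (1 + \<epsilon>) y x0 u"
  defines "w \<equiv> \<lambda>s. u s - u_opt s"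
  shows "(LINT s:{0..\<epsilon>}|lborel. w s) = 0"
    and "AE s in lborel. s \<in> {\<epsilon>..<1} \<longrightarrow> w s = 0"
    and "AE s in lborel. s \<in> {1..1 + \<epsilon>} \<longrightarrow> w s = - a1 * (LINT r:{0..s - 1}|lborel. w r)"
proof -
  from adm obtain x where u: "L2_on {0..1 + \<epsilon>} u" and x: "dde_sol a1 y x0 u (1 + \<epsilon>) x"
    and x_0: "\<forall>t\<in>{\<epsilon>..1 + \<epsilon>}. x t = 0"
    unfolding admissible_def by auto
  define g where "g = (\<lambda>s. a1 * (if s < 1 then 0 else x (s - 1) - x_opt (s - 1)) + w s)"
  have g_int: "set_integrable lborel {0..1 + \<epsilon>} g"
    and diff: "\<And>t. t \<in> {0..1 + \<epsilon>} \<Longrightarrow> x t - x_opt t = (LINT s:{0..t}|lborel. g s)"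
    using dde_sol_diff[OF x dde_sol_x_opt x0_L2 u L2_u_opt] unfolding g_def w_def by auto
  have diff_0: "(LINT s:{0..t}|lborel. g s) = 0" if "t \<in> {\<epsilon>..1 + \<epsilon>}" for t
    using diff[of t] x_0 x_opt_vanishes[of t] that eps_pos by auto
  have early: "x r - x_opt r = (LINT s:{0..r}|lborel. w s)" if "r \<in> {0..\<epsilon>}" for r
  proof -
    have "(LINT s:{0..r}|lborel. g s) = (LINT s:{0..r}|lborel. w s)"
      by (rule set_lebesgue_integral_cong) (use that eps_less_1 in \<open>auto simp: g_def\<close>)
    then show ?thesis using diff[of r] that by auto
  qed
  have g_0: "AE s in lborel. s \<in> {\<epsilon>..1 + \<epsilon>} \<longrightarrow> g s = 0"
    by (rule AE_eq_0_if_primitive_vanishes[OF g_int]) (use eps_pos diff_0 in auto)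
  show "(LINT s:{0..\<epsilon>}|lborel. w s) = 0"
    using early[of \<epsilon>] x_0 x_opt_eps eps_pos by simp
  show "AE s in lborel. s \<in> {\<epsilon>..<1} \<longrightarrow> w s = 0"
    using g_0 by eventually_elim (use eps_pos eps_less_1 in \<open>auto simp: g_def\<close>)
  show "AE s in lborel. s \<in> {1..1 + \<epsilon>} \<longrightarrow> w s = - a1 * (LINT r:{0..s - 1}|lborel. w r)"
    using g_0
  proof eventually_elim
    case (elim s)
    show ?case
    proof
      assume s: "s \<in> {1..1 + \<epsilon>}"
      then have "g s = 0" using elim eps_less_1 by auto
      then show "w s = - a1 * (LINT r:{0..s - 1}|lborel. w r)"
        using early[of "s - 1"] s by (simp add: g_def)
    qed
  qed
qed

lemma integral_u_opt_final:
  assumes w: "L2_on {1..1 + \<epsilon>} w" and W: "continuous_on {0..\<epsilon>} W"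
    and w_final: "AE t in lborel. t \<in> {1..1 + \<epsilon>} \<longrightarrow> w t = - a1 * W (t - 1)"
  shows "(LINT t:{1..1 + \<epsilon>}|lborel. u_opt t * w t) = a1^2 * (LINT r:{0..\<epsilon>}|lborel. x_opt r * W r)"
proof -
  define V where "V = (\<lambda>t. a1^2 * (x_opt (t - 1) * W (t - 1)))"
  have shift: "\<And>t. t \<in> {1..1 + \<epsilon>} \<longleftrightarrow> t - 1 \<in> {0..\<epsilon>}"
    by auto
  have uw_int: "set_integrable lborel {1..1 + \<epsilon>} (\<lambda>t. u_opt t * w t)"
    by (rule L2_on_mult_integrable[OF L2_on_subset[OF L2_u_opt] w]) auto
  have "continuous_on {0..\<epsilon>} (\<lambda>r. a1^2 * (x_opt r * W r))"
    by (intro continuous_intros W continuous_on_subset[OF continuous_x_opt]) auto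
  then have V_int: "set_integrable lborel {1..1 + \<epsilon>} V"
    unfolding V_def using set_integral_shift(2)[OF shift, of "\<lambda>r. a1^2 * (x_opt r * W r)"]
    by (simp add: borel_integrable_atLeastAtMost')
  have "(LINT t:{1..1 + \<epsilon>}|lborel. u_opt t * w t - V t) = 0"
    using w_final
    by (intro set_integral_eq_0_AE, eventually_elim) (simp add: V_def u_opt_final power2_eq_square)
  then show ?thesis
    using set_integral_diff(2)[OF uw_int V_int]
    by (simp add: V_def set_integral_shift(1)[OF shift, of "\<lambda>r. x_opt r * W r"])
qed

lemma u_opt_orthogonal:
  assumes adm: "admissible a1 (1 + \<epsilon>) y x0 u"
  shows "(LINT t:{0..1 + \<epsilon>}|lborel. u_opt t * (u t - u_opt t)) = 0"
proof -
  define w where "w = (\<lambda>s. u s - u_opt s)"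
  define W where "W = (\<lambda>r. LINT s:{0..r}|lborel. w s)"
  have w_L2: "L2_on {0..1 + \<epsilon>} w"
    using adm L2_u_opt unfolding admissible_def w_def by (auto intro: L2_on_diff)
  have uw_int: "set_integrable lborel {0..1 + \<epsilon>} (\<lambda>t. u_opt t * w t)"
    by (rule L2_on_mult_integrable[OF L2_u_opt w_L2])
  have w_eps: "L2_on {0..\<epsilon>} w"
    by (rule L2_on_subset[OF w_L2]) auto
  have u_opt0_w_int: "set_integrable lborel {0..\<epsilon>} (\<lambda>t. u_opt0 t * w t)"
    by (rule L2_on_mult_integrable[OF _ w_eps], rule L2_on_continuous)
      (rule continuous_on_subset[OF continuous_u_opt0], use eps_less_1 in auto)
  have cont_W: "continuous_on {0..\<epsilon>} W"
    unfolding W_def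
    by (rule continuous_on_set_integral_primitive, rule L2_on_imp_set_integrable[OF w_eps])
      (auto simp: emeasure_lborel_Icc_eq)
  have w_0: "W \<epsilon> = 0"
    and w_middle: "AE t in lborel. t \<in> {\<epsilon>..<1} \<longrightarrow> w t = 0"
    and w_final: "AE t in lborel. t \<in> {1..1 + \<epsilon>} \<longrightarrow> w t = - a1 * W (t - 1)"
    using admissible_deviation[OF adm] unfolding W_def w_def by simp_all
  have "(LINT t:{0..<\<epsilon>}|lborel. u_opt t * w t) = (LINT t:{0..<\<epsilon>}|lborel. u_opt0 t * w t)"
    by (rule set_lebesgue_integral_cong) (auto simp: u_opt_initial)
  also have "\<dots> = (LINT t:{0..\<epsilon>}|lborel. u_opt0 t * w t)"
    by (rule set_integral_Ico_Icc[OF u_opt0_w_int])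
  finally have initial:
    "(LINT t:{0..<\<epsilon>}|lborel. u_opt t * w t) = (LINT t:{0..\<epsilon>}|lborel. u_opt0 t * w t)" .
  have "AE t in lborel. t \<in> {\<epsilon>..<1} \<longrightarrow> u_opt t * w t = 0"
    using w_middle by eventually_elim simp
  then have middle: "(LINT t:{\<epsilon>..<1}|lborel. u_opt t * w t) = 0"
    by (rule set_integral_eq_0_AE)
  have final: "(LINT t:{1..1 + \<epsilon>}|lborel. u_opt t * w t) = a1^2 * (LINT r:{0..\<epsilon>}|lborel. x_opt r * W r)"
    by (rule integral_u_opt_final[OF L2_on_subset[OF w_L2] cont_W w_final]) auto
  have "(LINT t:{0..1 + \<epsilon>}|lborel. u_opt t * w t)
      = (LINT t:{0..<\<epsilon>}|lborel. u_opt t * w t) + (LINT t:{\<epsilon>..<1}|lborel. u_opt t * w t)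
        + (LINT t:{1..1 + \<epsilon>}|lborel. u_opt t * w t)"
    by (rule set_integral_Icc_split3[OF uw_int]) (use eps_pos eps_less_1 in auto)
  also have "\<dots> = 0"
    using w_0 unfolding initial middle final W_def x_opt_weighted_primitive[OF w_eps] by simp
  finally show ?thesis unfolding w_def .
qed

end

theorem mainTheorem5:
  fixes a1 \<epsilon> y :: real and x0 :: "real \<Rightarrow> real"
  assumes "a1 \<noteq> 0" and "0 < \<epsilon>" and "\<epsilon> < 1" and "L2_on {-1..<0} x0"
  defines "T \<equiv> 1 + \<epsilon>"
    and "xt \<equiv> \<lambda>t. y + a1 * (LINT \<tau>:{0..t}|lborel. x0 (\<tau> - 1))"
  defines "c \<equiv> - a1 / sinh (a1 * \<epsilon>) *
              (xt \<epsilon> + a1 * (LINT \<tau>:{0..\<epsilon>}|lborel. sinh (a1 * (\<epsilon> - \<tau>)) * xt \<tau>))"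
  defines "u0 \<equiv> \<lambda>t. c * cosh (a1 * t) + a1^2 * (LINT \<tau>:{0..t}|lborel. cosh (a1 * (t - \<tau>)) * xt \<tau>)"
  defines "uh \<equiv> \<lambda>t. if 0 \<le> t \<and> t < \<epsilon> then u0 t
                  else if \<epsilon> \<le> t \<and> t < 1 then - a1 * x0 (t - 1)
                  else if 1 \<le> t \<and> t < 1 + \<epsilon> then - a1 * (xt (t - 1) + (LINT \<tau>:{0..t - 1}|lborel. u0 \<tau>))
                  else 0"
  shows "admissible a1 T y x0 uh \<and>
         (\<forall>u. admissible a1 T y x0 u \<longrightarrow> L2_norm_on {0..T} uh \<le> L2_norm_on {0..T} u) \<and>
         (\<forall>u. admissible a1 T y x0 u \<and> L2_norm_on {0..T} u \<le> L2_norm_on {0..T} uh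
              \<longrightarrow> (AE t in lborel. t \<in> {0..T} \<longrightarrow> u t = uh t))"
proof -
  interpret min_energy_problem a1 \<epsilon> y x0
    using assms(1-4) by unfold_locales
  have "uh = u_opt"
    unfolding uh_def u0_def c_def xt_def u_opt_def u_opt0_def c_opt_def x_free_def ..
  moreover have "L2_on {0..1 + \<epsilon>} u"
    and "(LINT t:{0..1 + \<epsilon>}|lborel. u_opt t * (u t - u_opt t)) = 0"
    if "admissible a1 (1 + \<epsilon>) y x0 u" for u
    using that u_opt_orthogonal by (auto simp: admissible_def)
  ultimately show ?thesis
    unfolding T_def using admissible_u_opt L2_norm_le_if_orthogonal[OF _ L2_u_opt] by blast
qed

end
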